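(* Let $\mathcal{V}$ be a finite set and let $p_{\theta^{(t)}}, p_{\mathrm{sft}}$ be probability distributions on $\mathcal{V}$ with full support. Let $\alpha\in[0,1)$ and define \[ q^{(t)}_y = \frac{p_{\theta^{(t)}}(y)^{1-\alpha}\,p_{\mathrm{sft}}(y)^{\alpha}}{Z}, \qquad Z=\sum_{y'\in\mathcal{V}} p_{\theta^{(t)}}(y')^{1-\alpha}\,p_{\mathrm{sft}}(y')^{\alpha}. \] Then \[ \mathrm{KL}\big(q^{(t)}\,\|\,p_{\theta^{(t)}}\big) \le \frac{\alpha}{1-\alpha}\,\mathrm{KL}\big(p_{\theta^{(t)}}\,\|\,p_{\mathrm{sft}}\big). \]
   Context: $\mathrm{KL}(u\|v)=\sum_{i} u_i\log(u_i/v_i)$ is the Kullback--Leibler divergence. $q^{(t)}$ is the anchor obtained by linear interpolation of logits followed by softmax (a renormalized geometric mean of the two distributions). In the paper these are conditional output distributions for a fixed input $x$, with full support since they are softmax outputs. *)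

theory Defs
  imports "HOL-Analysis.Analysis"
begin

definition KL :: "'a set \<Rightarrow> ('a \<Rightarrow> real) \<Rightarrow> ('a \<Rightarrow> real) \<Rightarrow> real" where
  "KL V u v = (\<Sum>i\<in>V. u i * ln (u i / v i))"

definition full_support_dist :: "'a set \<Rightarrow> ('a \<Rightarrow> real) \<Rightarrow> bool" where
  "full_support_dist V p \<longleftrightarrow> (\<forall>y\<in>V. p y > 0) \<and> (\<Sum>y\<in>V. p y) = 1"

definition anchor :: "'a set \<Rightarrow> real \<Rightarrow> ('a \<Rightarrow> real) \<Rightarrow> ('a \<Rightarrow> real) \<Rightarrow> ('a \<Rightarrow> real)" where
  "anchor V \<alpha> p s = (\<lambda>y. p y powr (1 - \<alpha>) * s y powr \<alpha> /
      (\<Sum>y'\<in>V. p y' powr (1 - \<alpha>) * s y' powr \<alpha>))"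

end

theory Submission
  imports Defs
begin

text \<open>With \<open>Z = \<Sum>y. p y powr (1 - \<alpha>) * s y powr \<alpha>\<close> and \<open>q\<close> the anchor, \<open>ln (r/q)\<close> is an affine
  combination of \<open>ln (r/p)\<close> and \<open>ln (r/s)\<close> up to the constant \<open>ln Z\<close>; averaging against any
  distribution \<open>r\<close> gives \<open>(1 - \<alpha>) KL(r\<parallel>p) + \<alpha> KL(r\<parallel>s) = KL(r\<parallel>q) - ln Z\<close>.
  Taking \<open>r = q\<close> and Gibbs' inequality for \<open>KL(q\<parallel>s)\<close> bounds \<open>(1 - \<alpha>) KL(q\<parallel>p)\<close> by \<open>-ln Z\<close>;
  taking \<open>r = p\<close> and Gibbs' inequality for \<open>KL(p\<parallel>q)\<close> bounds \<open>-ln Z\<close> by \<open>\<alpha> KL(p\<parallel>s)\<close>.\<close>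

lemma KL_self [simp]: "KL V u u = 0"
  by (auto simp: KL_def intro: sum.neutral)

lemma KL_nonneg:
  fixes u v :: "'a \<Rightarrow> real"
  assumes "finite V" and u_pos: "\<forall>y\<in>V. u y > 0" and v_pos: "\<forall>y\<in>V. v y > 0"
    and mass: "(\<Sum>y\<in>V. v y) \<le> (\<Sum>y\<in>V. u y)"
  shows "0 \<le> KL V u v"
proof -
  have "- KL V u v = (\<Sum>y\<in>V. u y * ln (v y / u y))"
    unfolding KL_def sum_negf[symmetric]
    by (rule sum.cong) (use u_pos v_pos in \<open>auto simp: ln_div algebra_simps\<close>)
  also have "\<dots> \<le> (\<Sum>y\<in>V. u y * (v y / u y - 1))"
    by (rule sum_mono) (use u_pos v_pos in \<open>auto intro: mult_left_mono ln_le_minus_one\<close>)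
  also have "\<dots> = (\<Sum>y\<in>V. v y) - (\<Sum>y\<in>V. u y)"
    unfolding sum_subtractf[symmetric]
    by (rule sum.cong) (use u_pos in \<open>auto simp: field_simps\<close>)
  finally show ?thesis
    using mass by linarith
qed

lemma geometric_weight_sum_pos:
  fixes p s :: "'a \<Rightarrow> real" and \<alpha> :: real
  assumes "finite V" and "V \<noteq> {}" and "\<forall>y\<in>V. p y > 0" and "\<forall>y\<in>V. s y > 0"
  shows "(\<Sum>y\<in>V. p y powr (1 - \<alpha>) * s y powr \<alpha>) > 0"
  using assms by (intro sum_pos) (auto intro!: mult_pos_pos)

lemma anchor_full_support_dist:
  fixes p s :: "'a \<Rightarrow> real" and \<alpha> :: real
  assumes "finite V" and "V \<noteq> {}" and "\<forall>y\<in>V. p y > 0" and "\<forall>y\<in>V. s y > 0"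
  shows "full_support_dist V (anchor V \<alpha> p s)"
  using geometric_weight_sum_pos[OF assms, of \<alpha>] assms(3,4)
  by (auto simp: full_support_dist_def anchor_def sum_divide_distrib[symmetric]
      intro!: divide_pos_pos mult_pos_pos)

lemma KL_geometric_mixture:
  fixes p s r :: "'a \<Rightarrow> real" and \<alpha> :: real
  assumes "finite V" and p_pos: "\<forall>y\<in>V. p y > 0" and s_pos: "\<forall>y\<in>V. s y > 0"
    and r: "full_support_dist V r"
  shows "(1 - \<alpha>) * KL V r p + \<alpha> * KL V r s
    = KL V r (anchor V \<alpha> p s) - ln (\<Sum>y\<in>V. p y powr (1 - \<alpha>) * s y powr \<alpha>)"
proof -
  define Z where "Z = (\<Sum>y\<in>V. p y powr (1 - \<alpha>) * s y powr \<alpha>)"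
  have r_pos: "\<forall>y\<in>V. r y > 0" and r_sum: "(\<Sum>y\<in>V. r y) = 1"
    using r by (auto simp: full_support_dist_def)
  then have "V \<noteq> {}" by auto
  then have Z_pos: "Z > 0"
    unfolding Z_def using assms(1) p_pos s_pos by (intro geometric_weight_sum_pos)
  have pointwise: "(1 - \<alpha>) * ln (r y / p y) + \<alpha> * ln (r y / s y)
      = ln (r y / anchor V \<alpha> p s y) - ln Z" if "y \<in> V" for y
  proof -
    have "p y > 0" "s y > 0" "r y > 0"
      using that p_pos s_pos r_pos by auto
    moreover from this have "ln (anchor V \<alpha> p s y) = (1 - \<alpha>) * ln (p y) + \<alpha> * ln (s y) - ln Z"
      using Z_pos by (simp add: anchor_def Z_def[symmetric] ln_div ln_mult ln_powr)
    moreover have "anchor V \<alpha> p s y > 0"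
      using anchor_full_support_dist[OF assms(1) \<open>V \<noteq> {}\<close> p_pos s_pos] that
      by (auto simp: full_support_dist_def)
    ultimately show ?thesis
      by (simp add: ln_div algebra_simps)
  qed
  have "(1 - \<alpha>) * KL V r p + \<alpha> * KL V r s
      = (\<Sum>y\<in>V. r y * ((1 - \<alpha>) * ln (r y / p y) + \<alpha> * ln (r y / s y)))"
    by (simp add: KL_def sum_distrib_left sum.distrib[symmetric] algebra_simps)
  also have "\<dots> = (\<Sum>y\<in>V. r y * ln (r y / anchor V \<alpha> p s y) - ln Z * r y)"
    by (rule sum.cong) (simp_all add: pointwise right_diff_distrib mult.commute)
  also have "\<dots> = KL V r (anchor V \<alpha> p s) - ln Z"
    by (simp add: KL_def sum_subtractf sum_distrib_left[symmetric] r_sum)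
  finally show ?thesis
    unfolding Z_def .
qed

theorem lemma5p3:
  fixes V :: "'a set" and p s :: "'a \<Rightarrow> real" and \<alpha> :: real
  assumes "finite V"
    and "full_support_dist V p" and "full_support_dist V s"
    and "0 \<le> \<alpha>" and "\<alpha> < 1"
  shows "KL V (anchor V \<alpha> p s) p \<le> \<alpha> / (1 - \<alpha>) * KL V p s"
proof -
  define q where "q = anchor V \<alpha> p s"
  define Z where "Z = (\<Sum>y\<in>V. p y powr (1 - \<alpha>) * s y powr \<alpha>)"
  have p_pos: "\<forall>y\<in>V. p y > 0" and p_sum: "(\<Sum>y\<in>V. p y) = 1"
    and s_pos: "\<forall>y\<in>V. s y > 0" and s_sum: "(\<Sum>y\<in>V. s y) = 1"
    using assms(2,3) by (auto simp: full_support_dist_def)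
  have q: "full_support_dist V q"
    unfolding q_def using assms(1) p_sum p_pos s_pos
    by (intro anchor_full_support_dist) auto
  have q_pos: "\<forall>y\<in>V. q y > 0" and q_sum: "(\<Sum>y\<in>V. q y) = 1"
    using q by (auto simp: full_support_dist_def)
  have "(1 - \<alpha>) * KL V q p + \<alpha> * KL V q s = - ln Z"
    using KL_geometric_mixture[OF assms(1) p_pos s_pos q] by (simp add: q_def Z_def)
  moreover have "\<alpha> * KL V p s = KL V p q - ln Z"
    using KL_geometric_mixture[OF assms(1) p_pos s_pos assms(2)] by (simp add: q_def Z_def)
  moreover have "0 \<le> KL V q s"
    using KL_nonneg[OF assms(1) q_pos s_pos] q_sum s_sum by simp
  moreover have "0 \<le> KL V p q"
    using KL_nonneg[OF assms(1) p_pos q_pos] p_sum q_sum by simp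
  ultimately have "(1 - \<alpha>) * KL V q p \<le> \<alpha> * KL V p s"
    using assms(4) by (smt (verit) mult_nonneg_nonneg)
  then show ?thesis
    using assms(5) by (simp add: q_def pos_le_divide_eq mult.commute)
qed

end
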